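(* In the security-third model, for any attacker $m$, destination $d$, and AS $s$: if $s$ uses (in the stable routing state during $m$'s attack) a route to $d$ that avoids $m$ when the set of secure ASes is $S$, then $s$ uses a route to $d$ that avoids $m$ for every set of secure ASes $T\supset S$.
   Context: An AS graph is an undirected graph $G=(V,E)$ of ASes; each edge is labeled customer–provider or peer–peer. Routing is to a destination $d$; $d$ announces "$d$" to its neighbors; each other AS selects at most one route to $d$ among those announced by neighbors and announces it (prepended with itself) per the export policy: a route whose next hop is a customer is announced to all neighbors, otherwise only to customers. Route type is given by the relation of the next hop; length is the number of hops in the announced path. Insecure ASes rank routes by (LP) customer over peer over provider, then (SP) shorter over longer, then (TB) a fixed deterministic AS-specific tie-break. For a set of secure ASes, a route is secure iff all ASes on it are secure; in the security-third model each secure AS applies (SecP): prefer secure over insecure routes, between SP and TB. The attack: attacker $m\ne d$ (not a neighbor of $d$) announces the bogus path "$m,d$" via insecure BGP to all its neighbors; routes containing $m$ are insecure. A stable routing state is one in which no AS re-running its selection changes its route. *)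

theory Defs
  imports Main "HOL-Library.Product_Lexorder"
begin

(* AS graph: cust a b means "a is a customer of b" (b is a provider of a);
   peer a b means a and b are peers. *)
definition nbr :: "('a \<Rightarrow> 'a \<Rightarrow> bool) \<Rightarrow> ('a \<Rightarrow> 'a \<Rightarrow> bool) \<Rightarrow> 'a \<Rightarrow> 'a \<Rightarrow> bool" where
  "nbr cust peer a b \<longleftrightarrow> cust a b \<or> cust b a \<or> peer a b"

definition as_graph :: "'a set \<Rightarrow> ('a \<Rightarrow> 'a \<Rightarrow> bool) \<Rightarrow> ('a \<Rightarrow> 'a \<Rightarrow> bool) \<Rightarrow> bool" where
  "as_graph V cust peer \<longleftrightarrow> finite V
     \<and> (\<forall>a b. cust a b \<longrightarrow> a \<in> V \<and> b \<in> V \<and> a \<noteq> b \<and> \<not> cust b a \<and> \<not> peer a b)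
     \<and> (\<forall>a b. peer a b \<longrightarrow> a \<in> V \<and> b \<in> V \<and> a \<noteq> b \<and> peer b a)"

definition no_cp_cycles :: "('a \<Rightarrow> 'a \<Rightarrow> bool) \<Rightarrow> bool" where
  "no_cp_cycles cust \<longleftrightarrow> acyclic {(x, y). cust x y}"

(* Routes are lists of ASes: the route of AS a is  a # (path announced by its next hop),
   ending in d.  Export policy: neighbour n with route p announces p to a iff
   n = d, or n = m (the attacker announces its bogus path to everyone), or the next hop of n
   is a customer of n, or a is a customer of n. *)
definition exports :: "('a \<Rightarrow> 'a \<Rightarrow> bool) \<Rightarrow> 'a \<Rightarrow> 'a \<Rightarrow> 'a \<Rightarrow> 'a list \<Rightarrow> 'a \<Rightarrow> bool" where
  "exports cust d m n p a \<longleftrightarrow> n = d \<or> n = m \<or> cust a n \<or> (length p \<ge> 2 \<and> cust (p ! 1) n)"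

definition avail :: "('a \<Rightarrow> 'a \<Rightarrow> bool) \<Rightarrow> ('a \<Rightarrow> 'a \<Rightarrow> bool) \<Rightarrow> 'a \<Rightarrow> 'a
                      \<Rightarrow> ('a \<Rightarrow> 'a list option) \<Rightarrow> 'a \<Rightarrow> 'a list set" where
  "avail cust peer d m \<sigma> a = {a # p | n p. nbr cust peer a n \<and> \<sigma> n = Some p \<and>
       exports cust d m n p a \<and> a \<notin> set p}"

definition lp_rank :: "('a \<Rightarrow> 'a \<Rightarrow> bool) \<Rightarrow> ('a \<Rightarrow> 'a \<Rightarrow> bool) \<Rightarrow> 'a \<Rightarrow> 'a list \<Rightarrow> nat" where
  "lp_rank cust peer a r = (if cust (r ! 1) a then 0 else if peer (r ! 1) a then 1 else 2)"

definition secure_route :: "'a set \<Rightarrow> 'a \<Rightarrow> 'a list \<Rightarrow> bool" where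
  "secure_route S m r \<longleftrightarrow> set r \<subseteq> S \<and> m \<notin> set r"

(* security-third ranking key (smaller is better), compared lexicographically:
   LP, then SP (length), then SecP (only for secure ASes), then tie-break on next hop *)
definition rkey :: "('a \<Rightarrow> 'a \<Rightarrow> bool) \<Rightarrow> ('a \<Rightarrow> 'a \<Rightarrow> bool) \<Rightarrow> ('a \<Rightarrow> 'a \<Rightarrow> nat) \<Rightarrow> 'a set \<Rightarrow> 'a
                     \<Rightarrow> 'a \<Rightarrow> 'a list \<Rightarrow> nat \<times> nat \<times> nat \<times> nat" where
  "rkey cust peer tb S m a r =
     (lp_rank cust peer a r, length r,
      (if a \<in> S \<and> \<not> secure_route S m r then 1 else 0), tb a (r ! 1))"

definition stable :: "'a set \<Rightarrow> ('a \<Rightarrow> 'a \<Rightarrow> bool) \<Rightarrow> ('a \<Rightarrow> 'a \<Rightarrow> bool) \<Rightarrow> ('a \<Rightarrow> 'a \<Rightarrow> nat)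
                      \<Rightarrow> 'a set \<Rightarrow> 'a \<Rightarrow> 'a \<Rightarrow> ('a \<Rightarrow> 'a list option) \<Rightarrow> bool" where
  "stable V cust peer tb S d m \<sigma> \<longleftrightarrow>
     \<sigma> d = Some [d] \<and> \<sigma> m = Some [m, d] \<and> (\<forall>a. a \<notin> V \<longrightarrow> \<sigma> a = None) \<and>
     (\<forall>a \<in> V - {d, m}. (case \<sigma> a of
         None \<Rightarrow> avail cust peer d m \<sigma> a = {}
       | Some r \<Rightarrow> r \<in> avail cust peer d m \<sigma> a \<and>
            (\<forall>r' \<in> avail cust peer d m \<sigma> a. rkey cust peer tb S m a r \<le> rkey cust peer tb S m a r')))"

end

theory Submission
  imports Defs
begin

text \<open>
  Call the pair (LP rank, length) of a route its class. The class of the route an AS uses is the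
  same in every stable state, whatever the secure set and the tie-break: by induction on the
  class, a route is assembled from the next hop's route, whose class is strictly smaller, and a
  loop through the AS itself would only produce an even better route. So only SecP and TB are
  affected by enlarging the secure set from S to T. By induction on the route length, a secure
  route stays secure: the next hop's route is still secure and available with the same class, and
  SecP prefers it. If the S-route of s avoids m but its T-route is insecure, then neither choice
  was decided by SecP, so both were decided by the tie-break among routes of the same class;
  injectivity of the tie-break forces the same next hop, whose T-route avoids m by induction.
\<close>

definition route_class :: "('a \<Rightarrow> 'a \<Rightarrow> bool) \<Rightarrow> ('a \<Rightarrow> 'a \<Rightarrow> bool) \<Rightarrow> 'a \<Rightarrow> 'a list \<Rightarrow> nat \<times> nat" where
  "route_class cust peer a r = (lp_rank cust peer a r, length r)"

definition sec_penalty :: "'a set \<Rightarrow> 'a \<Rightarrow> 'a \<Rightarrow> 'a list \<Rightarrow> nat" where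
  "sec_penalty S m a r = (if a \<in> S \<and> \<not> secure_route S m r then 1 else 0)"

lemma rkey_le_imp_route_class_le:
  "rkey cust peer tb S m a r \<le> rkey cust peer tb S m a q \<Longrightarrow>
     route_class cust peer a r \<le> route_class cust peer a q"
  unfolding rkey_def route_class_def by auto

lemma rkey_le_same_class:
  assumes "rkey cust peer tb S m a r \<le> rkey cust peer tb S m a q"
    and "route_class cust peer a r = route_class cust peer a q"
  shows "(sec_penalty S m a r, tb a (r ! 1)) \<le> (sec_penalty S m a q, tb a (q ! 1))"
  using assms unfolding rkey_def route_class_def sec_penalty_def by auto

lemma lp_rank_le_2: "lp_rank cust peer a r \<le> 2"
  unfolding lp_rank_def by simp

lemma sec_penalty_le_if_not_secure:
  "\<not> (a \<in> S \<and> secure_route S m r) \<Longrightarrow> sec_penalty S m a q \<le> sec_penalty S m a r"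
  unfolding sec_penalty_def by auto

lemma exports_cong_route_class:
  assumes "exports cust d m n p a" and "route_class cust peer n p' = route_class cust peer n p"
  shows "exports cust d m n p' a"
  using assms unfolding exports_def route_class_def lp_rank_def by (auto split: if_splits)

lemma stable_fixed_routes:
  assumes "stable V cust peer tb1 S1 d m \<sigma>1" and "stable V cust peer tb2 S2 d m \<sigma>2"
    and "a \<in> {d, m}"
  shows "\<sigma>2 a = \<sigma>1 a"
  using assms unfolding stable_def by auto

lemma stable_route_fixed_subset:
  assumes "stable V cust peer tb S d m \<sigma>" and "\<sigma> a = Some q" and "a \<in> {d, m}"
  shows "set q \<subseteq> {d, m}"
  using assms unfolding stable_def by auto

lemma stable_route_Cons:
  assumes st: "stable V cust peer tb S d m \<sigma>" and a: "\<sigma> a = Some q"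
  obtains q' where "q = a # q'"
proof (cases "a \<in> {d, m}")
  case True
  then show ?thesis using st a that unfolding stable_def by auto
next
  case False
  have "a \<in> V" using st a unfolding stable_def by (metis option.distinct(1))
  then have "q \<in> avail cust peer d m \<sigma> a" using st a False unfolding stable_def by force
  then show ?thesis using that unfolding avail_def by blast
qed

lemma stable_SomeE:
  assumes st: "stable V cust peer tb S d m \<sigma>" and a: "\<sigma> a = Some q" and "a \<notin> {d, m}"
  obtains n p where "q = a # n # p" and "nbr cust peer a n" and "\<sigma> n = Some (n # p)"
    and "exports cust d m n (n # p) a"
    and "\<forall>q' \<in> avail cust peer d m \<sigma> a. rkey cust peer tb S m a q \<le> rkey cust peer tb S m a q'"
proof -
  have "a \<in> V" using st a unfolding stable_def by (metis option.distinct(1))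
  then have "q \<in> avail cust peer d m \<sigma> a"
    and best: "\<forall>q' \<in> avail cust peer d m \<sigma> a. rkey cust peer tb S m a q \<le> rkey cust peer tb S m a q'"
    using st a assms(3) unfolding stable_def by force+
  then obtain n p where "q = a # p" "nbr cust peer a n" "\<sigma> n = Some p" "exports cust d m n p a" "a \<notin> set p"
    unfolding avail_def by blast
  moreover obtain p' where "p = n # p'" using stable_route_Cons[OF st \<open>\<sigma> n = Some p\<close>] .
  ultimately show ?thesis using that best by blast
qed

lemma stable_route_tl:
  assumes st: "stable V cust peer tb S d m \<sigma>" and a: "\<sigma> a = Some (a # b # p)"
  shows "\<sigma> b = Some (b # p)"
proof (cases "a \<in> {d, m}")
  case True
  then show ?thesis using assms unfolding stable_def by auto
next
  case False
  obtain n p' where "a # b # p = a # n # p'" "\<sigma> n = Some (n # p')"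
    using stable_SomeE[OF st a False] by blast
  then show ?thesis by simp
qed

lemma stable_route_drop:
  assumes st: "stable V cust peer tb S d m \<sigma>"
  shows "\<sigma> a = Some q \<Longrightarrow> i < length q \<Longrightarrow> \<sigma> (q ! i) = Some (drop i q)"
proof (induction i arbitrary: a q)
  case 0
  obtain q' where "q = a # q'" using stable_route_Cons[OF st "0.prems"(1)] .
  then show ?case using "0.prems"(1) by simp
next
  case (Suc i)
  obtain q' where q': "q = a # q'" using stable_route_Cons[OF st Suc.prems(1)] .
  then obtain b p where q: "q = a # b # p" using Suc.prems(2) by (cases q') auto
  have "\<sigma> b = Some (b # p)" using stable_route_tl[OF st] Suc.prems(1) q by blast
  from Suc.IH[OF this] show ?case using Suc.prems(2) q by simp
qed

context
  fixes V :: "'a set" and cust peer :: "'a \<Rightarrow> 'a \<Rightarrow> bool" and d m :: 'a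
  assumes graph: "as_graph V cust peer"
begin

lemma nbr_irrefl: "nbr cust peer a b \<Longrightarrow> a \<noteq> b"
  using graph unfolding as_graph_def nbr_def by blast

lemma exported_to_provider_or_peer:
  assumes "exports cust d m n (n # p) s" and "n \<notin> {d, m}"
    and "lp_rank cust peer s (s # n # p) < 2"
  shows "lp_rank cust peer n (n # p) = 0"
proof -
  have "cust n s \<or> peer n s" using assms(3) unfolding lp_rank_def by (auto split: if_splits)
  then have "\<not> cust s n" using graph unfolding as_graph_def by blast
  then show ?thesis using assms(1,2) unfolding exports_def lp_rank_def by auto
qed

lemma route_class_next_hop_less:
  assumes "exports cust d m n (n # p) s" and "n \<notin> {d, m}"
  shows "route_class cust peer n (n # p) < route_class cust peer s (s # n # p)"
proof -
  have "lp_rank cust peer n (n # p) \<le> lp_rank cust peer s (s # n # p)"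
  proof (cases "lp_rank cust peer s (s # n # p) < 2")
    case True
    then show ?thesis using exported_to_provider_or_peer[OF assms] by simp
  next
    case False
    then show ?thesis using lp_rank_le_2[of cust peer n "n # p"] by linarith
  qed
  then show ?thesis unfolding route_class_def by auto
qed

lemma customer_route_members:
  assumes st: "stable V cust peer tb S d m \<sigma>"
  shows "\<sigma> a = Some q \<Longrightarrow> a \<notin> {d, m} \<Longrightarrow> lp_rank cust peer a q = 0 \<Longrightarrow> b \<in> set q \<Longrightarrow> b \<notin> {d, m}
    \<Longrightarrow> \<exists>q'. \<sigma> b = Some q' \<and> lp_rank cust peer b q' = 0"
proof (induction q arbitrary: a)
  case Nil
  then show ?case by simp
next
  case (Cons c q)
  obtain n p where "c # q = a # n # p" and n: "\<sigma> n = Some (n # p)"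
    and ex: "exports cust d m n (n # p) a"
    using stable_SomeE[OF st Cons.prems(1,2)] by metis
  then have a: "c = a" and q: "q = n # p" by simp_all
  show ?case
  proof (cases "b = a")
    case True
    then show ?thesis using Cons.prems(1,3) by blast
  next
    case False
    then have b: "b \<in> set q" using Cons.prems(4) a by simp
    then have n_free: "n \<notin> {d, m}" using stable_route_fixed_subset[OF st n] q Cons.prems(5) by blast
    then have "lp_rank cust peer n q = 0"
      using exported_to_provider_or_peer[OF ex] Cons.prems(3) a q by simp
    then show ?thesis using Cons.IH[OF _ n_free _ b Cons.prems(5)] n q by simp
  qed
qed

text \<open>If s is reached through a loop, its own route is a suffix of that loop, hence strictly better.\<close>

lemma avail_via_next_hop_or_better:
  assumes st1: "stable V cust peer tb1 S1 d m \<sigma>1" and st2: "stable V cust peer tb2 S2 d m \<sigma>2"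
    and r: "\<sigma>1 s = Some (s # n # p)" and s: "s \<notin> {d, m}" and q: "\<sigma>2 n = Some q"
    and same_class: "route_class cust peer n q = route_class cust peer n (n # p)"
  shows "s # q \<in> avail cust peer d m \<sigma>2 s
         \<and> route_class cust peer s (s # q) = route_class cust peer s (s # n # p)
       \<or> (\<exists>r'. \<sigma>2 s = Some r' \<and> route_class cust peer s r' < route_class cust peer s (s # n # p))"
proof -
  obtain q' where q': "q = n # q'" using stable_route_Cons[OF st2 q] .
  obtain nb: "nbr cust peer s n" and ex: "exports cust d m n (n # p) s"
    using stable_SomeE[OF st1 r s] by (metis list.inject)
  show ?thesis
  proof (cases "s \<in> set q")
    case False
    have "exports cust d m n q s" using exports_cong_route_class[OF ex same_class] .
    then have "s # q \<in> avail cust peer d m \<sigma>2 s" using nb q False unfolding avail_def by blast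
    moreover have "route_class cust peer s (s # q) = route_class cust peer s (s # n # p)"
      using same_class q' unfolding route_class_def lp_rank_def by simp
    ultimately show ?thesis by blast
  next
    case True
    then obtain i where i: "i < length q" "q ! i = s" by (metis in_set_conv_nth)
    have drop: "\<sigma>2 s = Some (drop i q)" using stable_route_drop[OF st2 q i(1)] i(2) by simp
    have "i > 0" using i(2) q' nbr_irrefl[OF nb] by (metis gr0I nth_Cons_0)
    then have len: "length (drop i q) < length (s # n # p)"
      using same_class i(1) unfolding route_class_def by simp
    have "lp_rank cust peer s (drop i q) \<le> lp_rank cust peer s (s # n # p)"
    proof (cases "lp_rank cust peer s (s # n # p) < 2")
      case True
      have "n \<notin> {d, m}" using stable_route_fixed_subset[OF st2 q] \<open>s \<in> set q\<close> s by blast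
      then have "lp_rank cust peer n q = 0"
        using exported_to_provider_or_peer[OF ex _ True] same_class unfolding route_class_def by simp
      then have "lp_rank cust peer s (drop i q) = 0"
        using customer_route_members[OF st2 q \<open>n \<notin> {d, m}\<close> _ \<open>s \<in> set q\<close> s] drop by auto
      then show ?thesis by simp
    next
      case False
      then show ?thesis using lp_rank_le_2[of cust peer s "drop i q"] by linarith
    qed
    then show ?thesis using drop len unfolding route_class_def by auto
  qed
qed

lemma stable_route_le_avail:
  assumes st: "stable V cust peer tb S d m \<sigma>" and s: "s \<notin> {d, m}"
    and q: "q \<in> avail cust peer d m \<sigma> s"
  shows "\<exists>r. \<sigma> s = Some r \<and> route_class cust peer s r \<le> route_class cust peer s q"
proof (cases "\<sigma> s")
  case None
  have "s \<in> V" using q graph unfolding avail_def nbr_def as_graph_def by blast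
  then show ?thesis using st s q None unfolding stable_def by force
next
  case (Some r)
  then show ?thesis using stable_SomeE[OF st Some s] q rkey_le_imp_route_class_le by metis
qed

text \<open>The induction ranges over all pairs of stable states, so that the hypothesis can be applied
  with the two states swapped; this pins down the class of the next hop's route exactly.\<close>

lemma stable_route_class_le:
  assumes "stable V cust peer tb1 S1 d m \<sigma>1" and "stable V cust peer tb2 S2 d m \<sigma>2"
    and "\<sigma>1 s = Some r"
  shows "\<exists>r'. \<sigma>2 s = Some r' \<and> route_class cust peer s r' \<le> route_class cust peer s r"
  using assms
proof (induction "route_class cust peer s r" arbitrary: tb1 S1 \<sigma>1 tb2 S2 \<sigma>2 s r rule: less_induct)
  case less
  note st1 = less.prems(1) and st2 = less.prems(2)
  show ?case
  proof (cases "s \<in> {d, m}")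
    case True
    then show ?thesis using stable_fixed_routes[OF st1 st2] less.prems(3) by auto
  next
    case s: False
    obtain n p where r: "r = s # n # p" and n: "\<sigma>1 n = Some (n # p)"
      and ex: "exports cust d m n (n # p) s"
      using stable_SomeE[OF st1 less.prems(3) s] by metis
    have "\<exists>q. \<sigma>2 n = Some q \<and> route_class cust peer n q = route_class cust peer n (n # p)"
    proof (cases "n \<in> {d, m}")
      case True
      then show ?thesis using stable_fixed_routes[OF st1 st2] n by auto
    next
      case False
      have n_less: "route_class cust peer n (n # p) < route_class cust peer s r"
        using route_class_next_hop_less[OF ex False] r by simp
      obtain q where q: "\<sigma>2 n = Some q" "route_class cust peer n q \<le> route_class cust peer n (n # p)"
        using less.hyps[OF n_less st1 st2 n] by blast
      then have "route_class cust peer n q < route_class cust peer s r" using n_less by order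
      then obtain q' where "\<sigma>1 n = Some q'" "route_class cust peer n q' \<le> route_class cust peer n q"
        using less.hyps[OF _ st2 st1 q(1)] by blast
      then show ?thesis using n q by auto
    qed
    then obtain q where q: "\<sigma>2 n = Some q"
      and same_class: "route_class cust peer n q = route_class cust peer n (n # p)" by blast
    from avail_via_next_hop_or_better[OF st1 st2 less.prems(3)[unfolded r] s q same_class] show ?thesis
      using stable_route_le_avail[OF st2 s] r by (metis order.strict_implies_order)
  qed
qed

lemma stable_route_class_eq:
  assumes st1: "stable V cust peer tb1 S1 d m \<sigma>1" and st2: "stable V cust peer tb2 S2 d m \<sigma>2"
    and r: "\<sigma>1 s = Some r"
  shows "\<exists>r'. \<sigma>2 s = Some r' \<and> route_class cust peer s r' = route_class cust peer s r"
proof -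
  obtain r' where r': "\<sigma>2 s = Some r'" "route_class cust peer s r' \<le> route_class cust peer s r"
    using stable_route_class_le[OF st1 st2 r] by blast
  moreover obtain r'' where "\<sigma>1 s = Some r''" "route_class cust peer s r'' \<le> route_class cust peer s r'"
    using stable_route_class_le[OF st2 st1 r'(1)] by blast
  ultimately show ?thesis using r by auto
qed

lemma next_hop_route_avail:
  assumes st1: "stable V cust peer tb1 S1 d m \<sigma>1" and st2: "stable V cust peer tb2 S2 d m \<sigma>2"
    and r: "\<sigma>1 s = Some (s # n # p)" and s: "s \<notin> {d, m}" and q: "\<sigma>2 n = Some q"
  shows "s # q \<in> avail cust peer d m \<sigma>2 s"
    and "route_class cust peer s (s # q) = route_class cust peer s (s # n # p)"
proof -
  have "route_class cust peer n q = route_class cust peer n (n # p)"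
    using stable_route_class_eq[OF st1 st2 stable_route_tl[OF st1 r]] q by auto
  moreover obtain r' where "\<sigma>2 s = Some r'"
    "route_class cust peer s r' = route_class cust peer s (s # n # p)"
    using stable_route_class_eq[OF st1 st2 r] by blast
  ultimately show "s # q \<in> avail cust peer d m \<sigma>2 s"
    and "route_class cust peer s (s # q) = route_class cust peer s (s # n # p)"
    using avail_via_next_hop_or_better[OF st1 st2 r s q] by auto
qed

lemma tiebreak_le_if_not_secure:
  assumes st: "stable V cust peer tb S d m \<sigma>" and r: "\<sigma> s = Some (s # n' # p')" and s: "s \<notin> {d, m}"
    and avail: "s # n # q \<in> avail cust peer d m \<sigma> s"
    and same_class: "route_class cust peer s (s # n # q) = route_class cust peer s (s # n' # p')"
    and insecure: "\<not> (s \<in> S \<and> secure_route S m (s # n' # p'))"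
  shows "tb s n' \<le> tb s n"
proof -
  have "rkey cust peer tb S m s (s # n' # p') \<le> rkey cust peer tb S m s (s # n # q)"
    using stable_SomeE[OF st r s] avail by blast
  from rkey_le_same_class[OF this same_class[symmetric]]
  have "(sec_penalty S m s (s # n' # p'), tb s n') \<le> (sec_penalty S m s (s # n # q), tb s n)"
    by simp
  then show ?thesis using sec_penalty_le_if_not_secure[OF insecure, of "s # n # q"] by auto
qed

lemma secure_route_persists:
  assumes stS: "stable V cust peer tbS S d m \<sigma>S" and stT: "stable V cust peer tbT T d m \<sigma>T"
    and ST: "S \<subseteq> T"
  shows "\<sigma>S s = Some r \<Longrightarrow> secure_route S m r \<Longrightarrow> \<exists>r'. \<sigma>T s = Some r' \<and> secure_route T m r'"
proof (induction "length r" arbitrary: s r rule: less_induct)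
  case less
  show ?case
  proof (cases "s \<in> {d, m}")
    case True
    then show ?thesis
      using stable_fixed_routes[OF stS stT True] less.prems ST unfolding secure_route_def by auto
  next
    case s: False
    obtain n p where r: "r = s # n # p" and n: "\<sigma>S n = Some (n # p)"
      using stable_SomeE[OF stS less.prems(1) s] by metis
    have "secure_route S m (n # p)" using less.prems(2) r unfolding secure_route_def by auto
    then obtain q where q: "\<sigma>T n = Some q" "secure_route T m q"
      using less.hyps[OF _ n] r by auto
    obtain r' where r': "\<sigma>T s = Some r'" "route_class cust peer s r' = route_class cust peer s r"
      using stable_route_class_eq[OF stS stT less.prems(1)] by blast
    note avail = next_hop_route_avail[OF stS stT less.prems(1)[unfolded r] s q(1)]
    have "rkey cust peer tbT T m s r' \<le> rkey cust peer tbT T m s (s # q)"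
      using stable_SomeE[OF stT r'(1) s] avail(1) by blast
    from rkey_le_same_class[OF this] r'(2) avail(2) r
    have "sec_penalty T m s r' \<le> sec_penalty T m s (s # q)" by auto
    moreover have "s \<in> T" "s \<noteq> m" using less.prems(2) r ST unfolding secure_route_def by auto
    ultimately have "secure_route T m r'"
      using q(2) unfolding sec_penalty_def secure_route_def by (auto split: if_splits)
    then show ?thesis using r'(1) by blast
  qed
qed

lemma attacker_free_route_persists:
  assumes stS: "stable V cust peer tb S d m \<sigma>S" and stT: "stable V cust peer tb T d m \<sigma>T"
    and ST: "S \<subseteq> T" and inj: "\<forall>a. inj_on (tb a) {n. nbr cust peer a n}"
  shows "\<sigma>S s = Some r \<Longrightarrow> m \<notin> set r \<Longrightarrow> \<exists>r'. \<sigma>T s = Some r' \<and> m \<notin> set r'"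
proof (induction "length r" arbitrary: s r rule: less_induct)
  case less
  show ?case
  proof (cases "s \<in> {d, m}")
    case True
    then show ?thesis using stable_fixed_routes[OF stS stT True] less.prems by auto
  next
    case s: False
    obtain n p where r: "r = s # n # p" and nb: "nbr cust peer s n" and n: "\<sigma>S n = Some (n # p)"
      using stable_SomeE[OF stS less.prems(1) s] by metis
    obtain q where q: "\<sigma>T n = Some q" "m \<notin> set q"
      using less.hyps[OF _ n] less.prems(2) r by auto
    obtain q0 where q0: "q = n # q0" using stable_route_Cons[OF stT q(1)] .
    obtain r' where r': "\<sigma>T s = Some r'" "route_class cust peer s r' = route_class cust peer s r"
      using stable_route_class_eq[OF stS stT less.prems(1)] by blast
    obtain n' p' where r'_eq: "r' = s # n' # p'" and nb': "nbr cust peer s n'"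
      and n': "\<sigma>T n' = Some (n' # p')"
      using stable_SomeE[OF stT r'(1) s] by metis
    show ?thesis
    proof (cases "s \<in> T \<and> secure_route T m r'")
      case True
      then show ?thesis using r'(1) unfolding secure_route_def by blast
    next
      case insecure_T: False
      note availT = next_hop_route_avail[OF stS stT less.prems(1)[unfolded r] s q(1)]
      have "tb s n' \<le> tb s n"
        using tiebreak_le_if_not_secure[OF stT r'(1)[unfolded r'_eq] s availT(1)[unfolded q0]]
          availT(2) r'(2) insecure_T r r'_eq q0 by simp
      moreover have "tb s n \<le> tb s n'"
      proof -
        obtain q' where q': "\<sigma>S n' = Some q'"
          using stable_route_class_eq[OF stT stS n'] by blast
        obtain q0' where q0': "q' = n' # q0'" using stable_route_Cons[OF stS q'] .
        note availS = next_hop_route_avail[OF stT stS r'(1)[unfolded r'_eq] s q']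
        have "\<not> (s \<in> S \<and> secure_route S m r)"
          using secure_route_persists[OF stS stT ST less.prems(1)] r'(1) insecure_T ST by auto
        then show ?thesis
          using tiebreak_le_if_not_secure[OF stS less.prems(1)[unfolded r] s availS(1)[unfolded q0']]
            availS(2) r'(2) r r'_eq q0' by simp
      qed
      ultimately have "n' = n" using inj nb nb' unfolding inj_on_def by (metis antisym mem_Collect_eq)
      then have "r' = s # q" using r'_eq n' q(1) by simp
      then show ?thesis using r'(1) q(2) s by auto
    qed
  qed
qed

end

theorem theorem4:
  fixes V S T :: "'a set" and cust peer :: "'a \<Rightarrow> 'a \<Rightarrow> bool" and tb :: "'a \<Rightarrow> 'a \<Rightarrow> nat"
    and d m s :: 'a and \<sigma>S \<sigma>T :: "'a \<Rightarrow> 'a list option" and r :: "'a list"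
  assumes "as_graph V cust peer"
    and "no_cp_cycles cust"
    and "\<forall>a. inj_on (tb a) {n. nbr cust peer a n}"
    and "d \<in> V" and "m \<in> V" and "m \<noteq> d" and "\<not> nbr cust peer m d"
    and "S \<subset> T"
    and "stable V cust peer tb S d m \<sigma>S"
    and "stable V cust peer tb T d m \<sigma>T"
    and "\<sigma>S s = Some r" and "m \<notin> set r"
  shows "\<exists>r'. \<sigma>T s = Some r' \<and> m \<notin> set r'"
  using attacker_free_route_persists[OF assms(1,9,10) _ assms(3,11,12)] assms(8) by blast

end
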